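(* Let $N=(G=(V,E),\sigma,u,s)$ be a skew-symmetric network and $f$ an IS-flow in $N$. Then $f$ has maximum value among IS-flows in $N$ if and only if the split-graph $S(G^+,u_f)$ contains no regular path from $s$ to $s'$.
   Context: A skew-symmetric graph is a finite directed graph $G=(V,E)$ (parallel arcs allowed) with a map $\sigma$ of $V\cup E$ onto itself such that $\sigma(x)\ne x$, $\sigma(\sigma(x))=x$ for all $x$, $\sigma(V)=V$, and for each arc $a$ from $v$ to $w$, $\sigma(a)$ is an arc from $\sigma(w)$ to $\sigma(v)$. A function $h$ on $E$ is symmetric if $h(a)=h(\sigma(a))$. A skew-symmetric network is $N=(G,\sigma,u,s)$ with $u:E\to\mathbb Z_{\ge0}$ symmetric and source $s$; $s'=\sigma(s)$ is the sink. A flow is $f:E\to\mathbb R_{\ge0}$ with $f\le u$ and flow conservation at every node other than $s,s'$; value $|f|$ is the net outflow at $s$. An IS-flow is an integer-valued symmetric flow. $G^+=(V,E^+)$ is obtained from $G$ by adding for each arc $a=(x,y)$ a reverse arc $a^R=(y,x)$, with $\sigma(a^R)=(\sigma(a))^R$; residual capacities: $u_f(a)=u(a)-f(a)$ for $a\in E$, $u_f(a^R)=f(a)$. For a skew-symmetric graph $H$ with nonnegative integer symmetric capacity $h$, the split-graph $S(H,h)$ is obtained by replacing each arc $a=(x,y)$ by two parallel arcs $a_1,a_2$ from $x$ to $y$ with capacities $\lceil h(a)/2\rceil$ and $\lfloor h(a)/2\rfloor$ respectively and deleting arcs of zero capacity; its symmetry is $\sigma(a_i)=(\sigma(a))_i$.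 A regular path is a directed path containing no pair of mutually symmetric arcs ($a$ and $\sigma(a)$). *)

theory Defs
  imports Complex_Main
begin

text \<open>A directed multigraph is given by a vertex set V, an arc set E and
  tail/head maps on arcs (parallel arcs allowed). The skew symmetry sigma is
  given by its two components sv (on vertices) and se (on arcs).\<close>

definition skew_sym_graph ::
  "'v set \<Rightarrow> 'e set \<Rightarrow> ('e \<Rightarrow> 'v) \<Rightarrow> ('e \<Rightarrow> 'v) \<Rightarrow> ('v \<Rightarrow> 'v) \<Rightarrow> ('e \<Rightarrow> 'e) \<Rightarrow> bool" where
  "skew_sym_graph V E tail head sv se \<longleftrightarrow>
     finite V \<and> finite E \<and>
     (\<forall>e\<in>E. tail e \<in> V \<and> head e \<in> V) \<and>
     (\<forall>v\<in>V. sv v \<in> V \<and> sv v \<noteq> v \<and> sv (sv v) = v) \<and>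
     (\<forall>e\<in>E. se e \<in> E \<and> se e \<noteq> e \<and> se (se e) = e \<and>
              tail (se e) = sv (head e) \<and> head (se e) = sv (tail e))"

definition skew_sym_network ::
  "'v set \<Rightarrow> 'e set \<Rightarrow> ('e \<Rightarrow> 'v) \<Rightarrow> ('e \<Rightarrow> 'v) \<Rightarrow> ('v \<Rightarrow> 'v) \<Rightarrow> ('e \<Rightarrow> 'e)
     \<Rightarrow> ('e \<Rightarrow> nat) \<Rightarrow> 'v \<Rightarrow> bool" where
  "skew_sym_network V E tail head sv se u s \<longleftrightarrow>
     skew_sym_graph V E tail head sv se \<and> s \<in> V \<and> (\<forall>e\<in>E. u (se e) = u e)"

definition is_flow ::
  "'v set \<Rightarrow> 'e set \<Rightarrow> ('e \<Rightarrow> 'v) \<Rightarrow> ('e \<Rightarrow> 'v) \<Rightarrow> ('e \<Rightarrow> nat) \<Rightarrow> 'v \<Rightarrow> 'v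
     \<Rightarrow> ('e \<Rightarrow> real) \<Rightarrow> bool" where
  "is_flow V E tail head u s t f \<longleftrightarrow>
     (\<forall>e\<in>E. 0 \<le> f e \<and> f e \<le> real (u e)) \<and>
     (\<forall>v\<in>V - {s, t}. (\<Sum>e\<in>{e\<in>E. head e = v}. f e) = (\<Sum>e\<in>{e\<in>E. tail e = v}. f e))"

definition flow_value ::
  "'e set \<Rightarrow> ('e \<Rightarrow> 'v) \<Rightarrow> ('e \<Rightarrow> 'v) \<Rightarrow> 'v \<Rightarrow> ('e \<Rightarrow> real) \<Rightarrow> real" where
  "flow_value E tail head s f = (\<Sum>e\<in>{e\<in>E. tail e = s}. f e) - (\<Sum>e\<in>{e\<in>E. head e = s}. f e)"

definition is_IS_flow ::
  "'v set \<Rightarrow> 'e set \<Rightarrow> ('e \<Rightarrow> 'v) \<Rightarrow> ('e \<Rightarrow> 'v) \<Rightarrow> ('v \<Rightarrow> 'v) \<Rightarrow> ('e \<Rightarrow> 'e)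
     \<Rightarrow> ('e \<Rightarrow> nat) \<Rightarrow> 'v \<Rightarrow> ('e \<Rightarrow> real) \<Rightarrow> bool" where
  "is_IS_flow V E tail head sv se u s f \<longleftrightarrow>
     is_flow V E tail head u s (sv s) f \<and>
     (\<forall>e\<in>E. f e \<in> \<int>) \<and> (\<forall>e\<in>E. f (se e) = f e)"

text \<open>The graph G+: arcs are pairs (a, True) (= a) and (a, False) (= the reverse arc a^R).\<close>
definition plus_arcs :: "'e set \<Rightarrow> ('e \<times> bool) set" where
  "plus_arcs E = E \<times> UNIV"

definition plus_tl :: "('e \<Rightarrow> 'v) \<Rightarrow> ('e \<Rightarrow> 'v) \<Rightarrow> 'e \<times> bool \<Rightarrow> 'v" where
  "plus_tl tail head a = (if snd a then tail (fst a) else head (fst a))"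

definition plus_hd :: "('e \<Rightarrow> 'v) \<Rightarrow> ('e \<Rightarrow> 'v) \<Rightarrow> 'e \<times> bool \<Rightarrow> 'v" where
  "plus_hd tail head a = (if snd a then head (fst a) else tail (fst a))"

text \<open>sigma(a^R) = (sigma a)^R\<close>
definition plus_se :: "('e \<Rightarrow> 'e) \<Rightarrow> 'e \<times> bool \<Rightarrow> 'e \<times> bool" where
  "plus_se se a = (se (fst a), snd a)"

definition resid :: "('e \<Rightarrow> nat) \<Rightarrow> ('e \<Rightarrow> real) \<Rightarrow> 'e \<times> bool \<Rightarrow> real" where
  "resid u f a = (if snd a then real (u (fst a)) - f (fst a) else f (fst a))"

text \<open>Split graph S(H,h): arc a becomes (a,True) = a_1 with capacity ceil(h a/2)
  and (a,False) = a_2 with capacity floor(h a/2); zero-capacity arcs deleted.\<close>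
definition split_cap :: "('x \<Rightarrow> real) \<Rightarrow> 'x \<times> bool \<Rightarrow> int" where
  "split_cap h b = (if snd b then \<lceil>h (fst b) / 2\<rceil> else \<lfloor>h (fst b) / 2\<rfloor>)"

definition split_arcs :: "'x set \<Rightarrow> ('x \<Rightarrow> real) \<Rightarrow> ('x \<times> bool) set" where
  "split_arcs A h = {b. fst b \<in> A \<and> 0 < split_cap h b}"

definition split_tl :: "('x \<Rightarrow> 'v) \<Rightarrow> 'x \<times> bool \<Rightarrow> 'v" where
  "split_tl tail b = tail (fst b)"

definition split_hd :: "('x \<Rightarrow> 'v) \<Rightarrow> 'x \<times> bool \<Rightarrow> 'v" where
  "split_hd head b = head (fst b)"

definition split_se :: "('x \<Rightarrow> 'x) \<Rightarrow> 'x \<times> bool \<Rightarrow> 'x \<times> bool" where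
  "split_se se b = (se (fst b), snd b)"

definition is_path :: "'x set \<Rightarrow> ('x \<Rightarrow> 'v) \<Rightarrow> ('x \<Rightarrow> 'v) \<Rightarrow> 'x list \<Rightarrow> 'v \<Rightarrow> 'v \<Rightarrow> bool" where
  "is_path A tail head p x y \<longleftrightarrow>
     p \<noteq> [] \<and> set p \<subseteq> A \<and> tail (p ! 0) = x \<and> head (last p) = y \<and>
     (\<forall>i. Suc i < length p \<longrightarrow> head (p ! i) = tail (p ! Suc i))"

definition is_regular_path ::
  "'x set \<Rightarrow> ('x \<Rightarrow> 'v) \<Rightarrow> ('x \<Rightarrow> 'v) \<Rightarrow> ('x \<Rightarrow> 'x) \<Rightarrow> 'x list \<Rightarrow> 'v \<Rightarrow> 'v \<Rightarrow> bool" where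
  "is_regular_path A tail head se p x y \<longleftrightarrow>
     is_path A tail head p x y \<and> (\<forall>a\<in>set p. se a \<notin> set p)"

end

theory Submission
  imports Defs
begin

text \<open>Both conditions are equivalent to the existence of a walk \<open>W\<close> from \<open>s\<close> to \<open>s'\<close> in \<open>G\<^sup>+\<close>
  that uses every arc \<open>a\<close> and its mirror \<open>\<sigma>(a)\<close> together at most \<open>u\<^sub>f(a)\<close> times.
  A regular \<open>s\<close>--\<open>s'\<close> path of \<open>S(G\<^sup>+, u\<^sub>f)\<close>, with its cycles removed, projects to such a walk:
  it contains at most one of \<open>a\<^sub>1, \<sigma>(a)\<^sub>1\<close> and at most one of \<open>a\<^sub>2, \<sigma>(a)\<^sub>2\<close>, and \<open>a\<^sub>2\<close>
  exists only if \<open>u\<^sub>f(a) \<ge> 2\<close>. Conversely, giving one arc of every mirror pair used by \<open>W\<close>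
  the first copy and the other arc the second copy lifts \<open>W\<close> to a regular path.

  Pushing one unit along \<open>W\<close> and one along its mirror image turns \<open>f\<close> into an IS-flow of
  value \<open>|f| + 2\<close>. If, conversely, an IS-flow \<open>g\<close> has \<open>|g| > |f|\<close>, the positive and negative
  parts of \<open>g - f\<close> form a symmetric integral budget on \<open>G\<^sup>+\<close> that is conserved away from
  \<open>s, s'\<close> and has positive excess at \<open>s\<close>. A longest walk from \<open>s\<close> within this budget ends
  at \<open>s'\<close>: at any other end \<open>z\<close>, comparing the budget around \<open>z\<close> with the walk's net use
  of \<open>z\<close> and of \<open>\<sigma>(z)\<close> exhibits an arc by which the walk can be extended.\<close>

section \<open>Walks and net outflow\<close>

fun walk :: "('a \<Rightarrow> 'v) \<Rightarrow> ('a \<Rightarrow> 'v) \<Rightarrow> 'v \<Rightarrow> 'a list \<Rightarrow> 'v \<Rightarrow> bool" where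
  "walk tail head x [] y \<longleftrightarrow> x = y"
| "walk tail head x (a # p) y \<longleftrightarrow> tail a = x \<and> walk tail head (head a) p y"

lemma walk_append:
  "walk tail head x (p @ q) y \<longleftrightarrow> (\<exists>z. walk tail head x p z \<and> walk tail head z q y)"
  by (induction p arbitrary: x) auto

lemma walk_iff_chain:
  assumes "p \<noteq> []"
  shows "walk tail head x p y \<longleftrightarrow> tail (p ! 0) = x \<and> head (last p) = y \<and>
           (\<forall>i. Suc i < length p \<longrightarrow> head (p ! i) = tail (p ! Suc i))"
  using assms
proof (induction p arbitrary: x)
  case (Cons a p)
  show ?case
  proof (cases "p = []")
    case False
    have "(\<forall>i. Suc i < length (a # p) \<longrightarrow> head ((a # p) ! i) = tail ((a # p) ! Suc i)) \<longleftrightarrow>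
          head a = tail (p ! 0) \<and> (\<forall>i. Suc i < length p \<longrightarrow> head (p ! i) = tail (p ! Suc i))"
      using False by (auto simp: nth_Cons split: nat.split)
    then show ?thesis
      using Cons.IH[OF False] False by auto
  qed simp
qed simp

lemma is_path_iff_walk:
  "is_path A tail head p x y \<longleftrightarrow> p \<noteq> [] \<and> set p \<subseteq> A \<and> walk tail head x p y"
  unfolding is_path_def by (cases "p = []") (simp_all add: walk_iff_chain)

lemma walk_split_iff:
  "walk (split_tl tail) (split_hd head) x p y \<longleftrightarrow> walk tail head x (map fst p) y"
  by (induction p arbitrary: x) (auto simp: split_tl_def split_hd_def)

lemma walk_remove_cycles:
  assumes "walk tail head x p y"
  obtains q where "walk tail head x q y" "set q \<subseteq> set p" "distinct q"
  using assms
proof (induction "length p" arbitrary: p rule: less_induct)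
  case less
  show ?case
  proof (cases "distinct p")
    case False
    then obtain i j where ij: "i < j" "j < length p" "p ! i = p ! j"
      by (metis distinct_conv_nth linorder_neqE_nat)
    have drop_i: "drop i p = p ! i # drop (Suc i) p" and drop_j: "drop j p = p ! j # drop (Suc j) p"
      using ij(1,2) by (simp_all add: Cons_nth_drop_Suc)
    have "walk tail head x (take i p @ drop i p) y" "walk tail head x (take j p @ drop j p) y"
      using less.prems(2) by simp_all
    then obtain z z' where "walk tail head x (take i p) z" "walk tail head z (drop i p) y"
        and "walk tail head z' (drop j p) y"
      unfolding walk_append by blast
    then have "walk tail head x (take i p) (tail (p ! i))" "walk tail head (tail (p ! j)) (drop j p) y"
      unfolding drop_i drop_j by auto
    then have shortcut: "walk tail head x (take i p @ drop j p) y"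
      using ij(3) by (auto simp: walk_append)
    have shorter: "length (take i p @ drop j p) < length p"
      using ij by simp
    have "set (take i p @ drop j p) \<subseteq> set p"
      using set_take_subset[of i p] set_drop_subset[of j p] by auto
    then show ?thesis
      using less.prems(1) less.hyps[OF shorter _ shortcut] by (meson subset_trans)
  qed (use less.prems in blast)
qed

definition net_out :: "'a set \<Rightarrow> ('a \<Rightarrow> 'v) \<Rightarrow> ('a \<Rightarrow> 'v) \<Rightarrow> ('a \<Rightarrow> 'b::ab_group_add) \<Rightarrow> 'v \<Rightarrow> 'b" where
  "net_out A tail head F v = (\<Sum>a\<in>{a\<in>A. tail a = v}. F a) - (\<Sum>a\<in>{a\<in>A. head a = v}. F a)"

lemma net_out_add:
  "net_out A tail head (\<lambda>a. F a + G a) v = net_out A tail head F v + net_out A tail head G v"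
  unfolding net_out_def by (simp add: sum.distrib)

lemma net_out_diff:
  "net_out A tail head (\<lambda>a. F a - G a) v = net_out A tail head F v - net_out A tail head G v"
  unfolding net_out_def by (simp add: sum_subtractf)

lemma net_out_of_int:
  "net_out A tail head (\<lambda>a. of_int (F a)) v = of_int (net_out A tail head F v)"
  unfolding net_out_def by simp

lemma net_out_cong:
  "(\<And>a. a \<in> A \<Longrightarrow> F a = G a) \<Longrightarrow> net_out A tail head F v = net_out A tail head G v"
  unfolding net_out_def by (intro arg_cong2[where f = minus] sum.cong) auto

lemma net_out_mono:
  fixes F G :: "'a \<Rightarrow> 'b::ordered_ab_group_add"
  assumes "\<And>a. a \<in> A \<Longrightarrow> tail a = v \<Longrightarrow> F a \<le> G a" "\<And>a. a \<in> A \<Longrightarrow> head a = v \<Longrightarrow> G a \<le> F a"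
  shows "net_out A tail head F v \<le> net_out A tail head G v"
  unfolding net_out_def using assms by (intro diff_mono sum_mono) auto

lemma flow_value_eq_net_out: "flow_value E tail head s f = net_out E tail head f s"
  unfolding flow_value_def net_out_def ..

lemma is_flow_iff_net_out:
  "is_flow V E tail head u s t f \<longleftrightarrow>
     (\<forall>e\<in>E. 0 \<le> f e \<and> f e \<le> real (u e)) \<and> (\<forall>v\<in>V - {s, t}. net_out E tail head f v = 0)"
  unfolding is_flow_def net_out_def right_minus_eq by (auto simp: eq_commute)

lemma net_out_count_walk:
  assumes "walk tail head x W y" "set W \<subseteq> A" "finite A"
  shows "net_out A tail head (\<lambda>a. int (count_list W a)) v
           = (if v = x then 1 else 0) - (if v = y then 1 else 0)"
  using assms(1,2)
proof (induction W arbitrary: x)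
  case (Cons b W)
  have "net_out A tail head (\<lambda>a. int (count_list (b # W) a)) v
      = net_out A tail head (\<lambda>a. (if a = b then 1 else 0) + int (count_list W a)) v"
    by (rule net_out_cong) simp
  also have "\<dots> = net_out A tail head (\<lambda>a. if a = b then 1 else 0) v
      + net_out A tail head (\<lambda>a. int (count_list W a)) v"
    by (rule net_out_add)
  also have "net_out A tail head (\<lambda>a. if a = b then 1 else 0) v
      = (if v = tail b then 1 else 0) - (if v = head b then 1 else (0::int))"
    using Cons.prems(2) \<open>finite A\<close> by (simp add: net_out_def sum.delta' eq_commute)
  also have "net_out A tail head (\<lambda>a. int (count_list W a)) v
      = (if v = head b then 1 else 0) - (if v = y then 1 else 0)"
    using Cons by simp
  finally show ?case
    using Cons.prems(1) by simp
qed (simp add: net_out_def)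

section \<open>Walks within a symmetric budget\<close>

definition within_sym_budget :: "'a set \<Rightarrow> ('a \<Rightarrow> 'a) \<Rightarrow> ('a \<Rightarrow> 'b::linordered_idom) \<Rightarrow> 'a list \<Rightarrow> bool" where
  "within_sym_budget A sa h W \<longleftrightarrow> (\<forall>a\<in>A. of_nat (count_list W a + count_list W (sa a)) \<le> h a)"

locale skew_graph =
  fixes V :: "'v set" and A :: "'a set" and tail head :: "'a \<Rightarrow> 'v"
    and sv :: "'v \<Rightarrow> 'v" and sa :: "'a \<Rightarrow> 'a"
  assumes skew_sym_graph: "skew_sym_graph V A tail head sv sa"
begin

lemma finite_arcs: "finite A"
  using skew_sym_graph unfolding skew_sym_graph_def by blast

lemma arc_ends: "a \<in> A \<Longrightarrow> tail a \<in> V \<and> head a \<in> V"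
  using skew_sym_graph unfolding skew_sym_graph_def by blast

lemma vertex_mirror: "v \<in> V \<Longrightarrow> sv v \<in> V \<and> sv v \<noteq> v \<and> sv (sv v) = v"
  using skew_sym_graph unfolding skew_sym_graph_def by blast

lemma arc_mirror:
  "a \<in> A \<Longrightarrow> sa a \<in> A \<and> sa a \<noteq> a \<and> sa (sa a) = a \<and> tail (sa a) = sv (head a) \<and> head (sa a) = sv (tail a)"
  using skew_sym_graph unfolding skew_sym_graph_def by blast

lemma walk_end_in_V: "walk tail head x W y \<Longrightarrow> x \<in> V \<Longrightarrow> set W \<subseteq> A \<Longrightarrow> y \<in> V"
  by (induction W arbitrary: x) (auto dest: arc_ends)

lemma sum_tail_mirror:
  assumes "v \<in> V"
  shows "(\<Sum>a\<in>{a\<in>A. tail a = v}. F (sa a)) = (\<Sum>a\<in>{a\<in>A. head a = sv v}. F a)"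
  by (rule sum.reindex_bij_witness[of _ sa sa]) (use assms arc_mirror vertex_mirror in auto)

lemma sum_head_mirror:
  assumes "v \<in> V"
  shows "(\<Sum>a\<in>{a\<in>A. head a = v}. F (sa a)) = (\<Sum>a\<in>{a\<in>A. tail a = sv v}. F a)"
  by (rule sum.reindex_bij_witness[of _ sa sa]) (use assms arc_mirror vertex_mirror in auto)

lemma net_out_mirror:
  "v \<in> V \<Longrightarrow> net_out A tail head (\<lambda>a. F (sa a)) v = - net_out A tail head F (sv v)"
  unfolding net_out_def sum_tail_mirror sum_head_mirror by simp

lemma net_out_symmetrize:
  "v \<in> V \<Longrightarrow> net_out A tail head (\<lambda>a. F a + F (sa a)) v = net_out A tail head F v - net_out A tail head F (sv v)"
  unfolding net_out_add net_out_mirror by simp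

lemma within_sym_budget_snoc:
  assumes budget: "within_sym_budget A sa h W" and b: "b \<in> A" "h (sa b) = h b"
    and slack: "of_nat (count_list W b + count_list W (sa b)) + 1 \<le> h b"
  shows "within_sym_budget A sa h (W @ [b])"
  unfolding within_sym_budget_def
proof
  fix a assume a: "a \<in> A"
  consider "a = b" | "a = sa b" | "a \<noteq> b" "sa a \<noteq> b"
    using arc_mirror[OF a] by metis
  then show "of_nat (count_list (W @ [b]) a + count_list (W @ [b]) (sa a)) \<le> h a"
  proof cases
    case 1
    then show ?thesis using slack arc_mirror[OF b(1)] by auto
  next
    case 2
    then show ?thesis using slack b arc_mirror[OF b(1)] by (auto simp: add.commute)
  next
    case 3
    then show ?thesis using budget a unfolding within_sym_budget_def by auto
  qed
qed

lemma exists_slack_arc: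
  fixes phi :: "'a \<Rightarrow> int"
  assumes s: "s \<in> V"
    and conservation: "\<And>v. v \<in> V - {s, sv s} \<Longrightarrow> net_out A tail head phi v = 0"
    and excess: "0 < net_out A tail head phi s"
    and walk: "walk tail head s W z" "set W \<subseteq> A" "within_sym_budget A sa phi W"
    and unfinished: "z \<noteq> sv s"
  shows "\<exists>b\<in>A. tail b = z \<and> int (count_list W b + count_list W (sa b)) + 1 \<le> phi b"
proof (rule ccontr)
  let ?c = "\<lambda>a. int (count_list W a)"
  assume "\<not> ?thesis"
  then have tight: "phi b \<le> ?c b + ?c (sa b)" if "b \<in> A" "tail b = z" for b
    using that by force
  have z: "z \<in> V"
    using walk_end_in_V walk(1,2) s by blast
  have "net_out A tail head phi z \<le> net_out A tail head (\<lambda>a. ?c a + ?c (sa a)) z"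
    by (rule net_out_mono) (use tight walk(3) in \<open>auto simp: within_sym_budget_def\<close>)
  also have "\<dots> = net_out A tail head ?c z - net_out A tail head ?c (sv z)"
    by (rule net_out_symmetrize[OF z])
  also have "\<dots> = (if z = s then 1 else 0) - 1"
  proof -
    have "sv z \<noteq> s" "sv z \<noteq> z"
      using vertex_mirror[OF z] unfinished by metis+
    then show ?thesis
      by (simp add: net_out_count_walk[OF walk(1,2) finite_arcs])
  qed
  finally have "net_out A tail head phi z \<le> (if z = s then 1 else 0) - 1" .
  then show False
    using excess conservation[of z] z unfinished by (cases "z = s") simp_all
qed

lemma exists_budget_walk:
  fixes phi :: "'a \<Rightarrow> int"
  assumes s: "s \<in> V"
    and nonneg: "\<And>a. a \<in> A \<Longrightarrow> 0 \<le> phi a"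
    and sym: "\<And>a. a \<in> A \<Longrightarrow> phi (sa a) = phi a"
    and conservation: "\<And>v. v \<in> V - {s, sv s} \<Longrightarrow> net_out A tail head phi v = 0"
    and excess: "0 < net_out A tail head phi s"
  obtains W where "walk tail head s W (sv s)" "set W \<subseteq> A" "within_sym_budget A sa phi W"
proof -
  define P where "P W \<longleftrightarrow> (\<exists>z. walk tail head s W z) \<and> set W \<subseteq> A \<and> within_sym_budget A sa phi W" for W
  have "P []"
    using nonneg by (simp add: P_def within_sym_budget_def)
  moreover have "\<forall>W. P W \<longrightarrow> length W < Suc (nat (\<Sum>a\<in>A. phi a))"
  proof (intro allI impI)
    fix W assume "P W"
    then have "int (length W) = (\<Sum>a\<in>A. int (count_list W a))"
      using sum_count_set[OF _ finite_arcs, of W] unfolding P_def by (simp flip: of_nat_sum)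
    also have "\<dots> \<le> (\<Sum>a\<in>A. phi a)"
      using \<open>P W\<close> unfolding P_def within_sym_budget_def by (intro sum_mono) force
    finally show "length W < Suc (nat (\<Sum>a\<in>A. phi a))" by linarith
  qed
  ultimately obtain W where longest: "P W" "\<And>W'. P W' \<Longrightarrow> length W' \<le> length W"
    using ex_has_greatest_nat[of P "[]" length] by blast
  then obtain z where walk: "walk tail head s W z" "set W \<subseteq> A" "within_sym_budget A sa phi W"
    unfolding P_def by blast
  show thesis
  proof (cases "z = sv s")
    case True
    then show thesis using that walk by blast
  next
    case False
    then obtain b where b: "b \<in> A" "tail b = z" "int (count_list W b + count_list W (sa b)) + 1 \<le> phi b"
      using exists_slack_arc[OF s conservation excess walk] by blast
    then have "P (W @ [b])"
      unfolding P_def using walk within_sym_budget_snoc[of phi W b] sym[OF b(1)] by (auto simp: walk_append)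
    then show thesis
      using longest(2) by force
  qed
qed

end

section \<open>Regular paths in split graphs\<close>

lemma split_arcs_iff:
  "(a, b) \<in> split_arcs A h \<longleftrightarrow> a \<in> A \<and> (if b then 0 < h a else 2 \<le> h a)"
  by (auto simp: split_arcs_def split_cap_def le_floor_iff)

lemma count_list_map_fst:
  "distinct p \<Longrightarrow> count_list (map fst p) a
     = (if (a, True) \<in> set p then 1 else 0) + (if (a, False) \<in> set p then 1 else 0)"
proof (induction p)
  case (Cons c p)
  then show ?case
    by (cases c) auto
qed simp

lemma budget_walk_of_regular_split_path:
  fixes h :: "'a \<Rightarrow> real"
  assumes path: "is_regular_path (split_arcs A h) (split_tl tail) (split_hd head) (split_se sa) p x y"
    and h_props: "\<And>a. a \<in> A \<Longrightarrow> h a \<in> \<int> \<and> 0 \<le> h a \<and> h (sa a) = h a"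
  obtains W where "walk tail head x W y" "set W \<subseteq> A" "within_sym_budget A sa h W"
proof -
  have p: "set p \<subseteq> split_arcs A h" "walk (split_tl tail) (split_hd head) x p y"
    and regular: "\<And>b. b \<in> set p \<Longrightarrow> split_se sa b \<notin> set p"
    using path unfolding is_regular_path_def is_path_iff_walk by auto
  obtain q where q: "walk (split_tl tail) (split_hd head) x q y" "set q \<subseteq> set p" "distinct q"
    using walk_remove_cycles[OF p(2)] .
  have "within_sym_budget A sa h (map fst q)"
    unfolding within_sym_budget_def
  proof
    fix a assume a: "a \<in> A"
    have any_copy: "1 \<le> h a" if "(a', b) \<in> set q" "a' \<in> {a, sa a}" for a' b
      using that q(2) p(1) h_props[OF a] Ints_nonzero_abs_ge1[of "h a"]
      by (cases b) (auto simp: split_arcs_iff)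
    have floor_copy: "2 \<le> h a" if "(a', False) \<in> set q" "a' \<in> {a, sa a}" for a'
      using that q(2) p(1) h_props[OF a] by (auto simp: split_arcs_iff)
    have "\<not> ((a, b) \<in> set q \<and> (sa a, b) \<in> set q)" for b
      using regular q(2) by (force simp: split_se_def)
    then show "real (count_list (map fst q) a + count_list (map fst q) (sa a)) \<le> h a"
      using any_copy floor_copy h_props[OF a] by (auto simp: count_list_map_fst[OF q(3)])
  qed
  moreover have "set (map fst q) \<subseteq> A"
    using q(2) p(1) by (auto simp: split_arcs_iff)
  ultimately show thesis
    using that q(1) by (simp add: walk_split_iff)
qed

context skew_graph
begin

lemma regular_split_path_of_budget_walk:
  fixes h :: "'a \<Rightarrow> real"
  assumes walk: "walk tail head x W y" "W \<noteq> []" "set W \<subseteq> A"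
    and budget: "within_sym_budget A sa h W"
  shows "\<exists>p. is_regular_path (split_arcs A h) (split_tl tail) (split_hd head) (split_se sa) p x y"
proof -
  have used: "of_nat (count_list W a + count_list W (sa a)) \<le> h a" if "a \<in> set W" for a
    using budget that walk(3) unfolding within_sym_budget_def by blast
  \<comment> \<open>\<open>rep\<close> chooses the same arc of the pair \<open>{a, sa a}\<close> for \<open>a\<close> and for \<open>sa a\<close>;
    that arc uses the first copy and its mirror the second\<close>
  define rep where "rep a = (SOME b. b \<in> {a, sa a})" for a
  define copy where "copy a \<longleftrightarrow> sa a \<notin> set W \<or> rep a = a" for a
  define p where "p = map (\<lambda>a. (a, copy a)) W"
  have "(a, copy a) \<in> split_arcs A h" if a: "a \<in> set W" for a
  proof (cases "copy a")
    case True
    have "count_list W a \<noteq> 0"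
      using a by (simp add: count_list_0_iff)
    then show ?thesis
      using True used[OF a] a walk(3) by (auto simp: split_arcs_iff)
  next
    case False
    then have "count_list W a \<noteq> 0" "count_list W (sa a) \<noteq> 0"
      using a by (auto simp: count_list_0_iff copy_def)
    then show ?thesis
      using False used[OF a] a walk(3) by (auto simp: split_arcs_iff)
  qed
  then have "set p \<subseteq> split_arcs A h"
    by (auto simp: p_def)
  moreover have "split_se sa b \<notin> set p" if "b \<in> set p" for b
  proof
    obtain a where a: "a \<in> set W" "b = (a, copy a)"
      using \<open>b \<in> set p\<close> by (auto simp: p_def)
    assume "split_se sa b \<in> set p"
    then have mate: "sa a \<in> set W" "copy (sa a) = copy a"
      using a by (auto simp: p_def split_se_def)
    have "sa (sa a) = a" "sa a \<noteq> a"
      using arc_mirror a walk(3) by auto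
    moreover have "rep (sa a) = rep a"
      using \<open>sa (sa a) = a\<close> by (simp add: rep_def insert_commute)
    moreover have "rep a \<in> {a, sa a}"
      unfolding rep_def by (rule someI[of _ a]) simp
    ultimately show False
      using mate a(1) by (auto simp: copy_def)
  qed
  moreover have "walk (split_tl tail) (split_hd head) x p y"
    using walk(1) by (simp add: p_def walk_split_iff comp_def)
  moreover have "p \<noteq> []"
    using walk(2) by (simp add: p_def)
  ultimately show ?thesis
    unfolding is_regular_path_def is_path_iff_walk by blast
qed

lemma regular_split_path_iff_budget_walk:
  fixes h :: "'a \<Rightarrow> real"
  assumes h_props: "\<And>a. a \<in> A \<Longrightarrow> h a \<in> \<int> \<and> 0 \<le> h a \<and> h (sa a) = h a" and "x \<noteq> y"
  shows "(\<exists>p. is_regular_path (split_arcs A h) (split_tl tail) (split_hd head) (split_se sa) p x y)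
     \<longleftrightarrow> (\<exists>W. walk tail head x W y \<and> set W \<subseteq> A \<and> within_sym_budget A sa h W)"
proof
  assume "\<exists>p. is_regular_path (split_arcs A h) (split_tl tail) (split_hd head) (split_se sa) p x y"
  then show "\<exists>W. walk tail head x W y \<and> set W \<subseteq> A \<and> within_sym_budget A sa h W"
    using budget_walk_of_regular_split_path[of A h tail head sa _ x y] h_props by metis
next
  assume "\<exists>W. walk tail head x W y \<and> set W \<subseteq> A \<and> within_sym_budget A sa h W"
  moreover have "walk tail head x [] y \<Longrightarrow> False"
    using \<open>x \<noteq> y\<close> by simp
  ultimately show "\<exists>p. is_regular_path (split_arcs A h) (split_tl tail) (split_hd head) (split_se sa) p x y"
    using regular_split_path_of_budget_walk by blast
qed

end

section \<open>IS-flows and walks in the residual graph\<close>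

lemma skew_sym_graph_plus:
  assumes "skew_sym_graph V E tail head sv se"
  shows "skew_sym_graph V (plus_arcs E) (plus_tl tail head) (plus_hd tail head) sv (plus_se se)"
  using assms unfolding skew_sym_graph_def plus_arcs_def plus_tl_def plus_hd_def plus_se_def by auto

lemma sum_plus_arcs:
  assumes "finite E"
  shows "(\<Sum>x\<in>{x\<in>plus_arcs E. P x}. H x)
       = (\<Sum>e\<in>{e\<in>E. P (e, True)}. H (e, True)) + (\<Sum>e\<in>{e\<in>E. P (e, False)}. H (e, False))"
proof -
  have "(\<Sum>x\<in>{x\<in>plus_arcs E. P x}. H x) = (\<Sum>e\<in>E. \<Sum>b\<in>UNIV. if P (e, b) then H (e, b) else 0)"
    using assms by (simp add: plus_arcs_def sum.inter_filter sum.cartesian_product')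
  also have "\<dots> = (\<Sum>e\<in>E. (if P (e, True) then H (e, True) else 0) + (if P (e, False) then H (e, False) else 0))"
    by (simp add: UNIV_bool add.commute)
  finally show ?thesis
    using assms by (simp add: sum.distrib sum.inter_filter)
qed

lemma net_out_plus_arcs:
  assumes "finite E"
  shows "net_out (plus_arcs E) (plus_tl tail head) (plus_hd tail head) F v
       = net_out E tail head (\<lambda>e. F (e, True) - F (e, False)) v"
  using assms by (simp add: net_out_def sum_plus_arcs plus_tl_def plus_hd_def sum_subtractf)

lemma skew_graph_of_network:
  "skew_sym_network V E tail head sv se u s \<Longrightarrow> skew_graph V E tail head sv se"
  unfolding skew_sym_network_def skew_graph_def by blast

lemma skew_graph_plus_of_network:
  "skew_sym_network V E tail head sv se u s
     \<Longrightarrow> skew_graph V (plus_arcs E) (plus_tl tail head) (plus_hd tail head) sv (plus_se se)"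
  unfolding skew_sym_network_def skew_graph_def using skew_sym_graph_plus by blast

lemma source_ne_sink:
  assumes "skew_sym_network V E tail head sv se u s"
  shows "s \<in> V" "s \<noteq> sv s"
  using assms unfolding skew_sym_network_def skew_sym_graph_def by metis+

lemma IS_flow_arc:
  "is_IS_flow V E tail head sv se u s f \<Longrightarrow> e \<in> E
     \<Longrightarrow> 0 \<le> f e \<and> f e \<le> real (u e) \<and> f e \<in> \<int> \<and> f (se e) = f e"
  unfolding is_IS_flow_def is_flow_def by blast

lemma IS_flow_conservation:
  "is_IS_flow V E tail head sv se u s f \<Longrightarrow> v \<in> V - {s, sv s} \<Longrightarrow> net_out E tail head f v = 0"
  unfolding is_IS_flow_def is_flow_iff_net_out by blast

lemma resid_plus_arcs:
  assumes "skew_sym_network V E tail head sv se u s" "is_IS_flow V E tail head sv se u s f"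
    and "x \<in> plus_arcs E"
  shows "resid u f x \<in> \<int> \<and> 0 \<le> resid u f x \<and> resid u f (plus_se se x) = resid u f x"
proof -
  obtain e b where x: "x = (e, b)" "e \<in> E"
    using assms(3) by (cases x) (auto simp: plus_arcs_def)
  then have "u (se e) = u e"
    using assms(1) unfolding skew_sym_network_def by blast
  then show ?thesis
    using x IS_flow_arc[OF assms(2) x(2)] by (auto simp: resid_def plus_se_def intro: Ints_diff)
qed

lemma IS_flow_augment:
  assumes net: "skew_sym_network V E tail head sv se u s"
    and f: "is_IS_flow V E tail head sv se u s f"
    and walk: "walk (plus_tl tail head) (plus_hd tail head) s W (sv s)" "set W \<subseteq> plus_arcs E"
    and budget: "within_sym_budget (plus_arcs E) (plus_se se) (resid u f) W"
  obtains g where "is_IS_flow V E tail head sv se u s g"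
    "flow_value E tail head s g = flow_value E tail head s f + 2"
proof -
  interpret G: skew_graph V E tail head sv se
    using skew_graph_of_network[OF net] .
  interpret P: skew_graph V "plus_arcs E" "plus_tl tail head" "plus_hd tail head" sv "plus_se se"
    using skew_graph_plus_of_network[OF net] .
  note s = source_ne_sink[OF net]
  define \<delta> where "\<delta> v = (if v = s then 1 else 0) - (if v = sv s then 1 else (0::int))" for v
  define c where "c x = int (count_list W x)" for x
  define d where "d e = c (e, True) - c (e, False)" for e
  \<comment> \<open>push one unit along W and one along its mirror image\<close>
  define g where "g e = f e + of_int (d e + d (se e))" for e
  have "net_out E tail head d v = net_out (plus_arcs E) (plus_tl tail head) (plus_hd tail head) c v" for v
    unfolding d_def net_out_plus_arcs[OF G.finite_arcs] ..
  then have net_d: "net_out E tail head d v = \<delta> v" for v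
    unfolding c_def \<delta>_def by (simp add: net_out_count_walk[OF walk P.finite_arcs])
  have net_dd: "net_out E tail head (\<lambda>e. d e + d (se e)) v = 2 * \<delta> v" if "v \<in> V" for v
  proof -
    have "sv v = s \<longleftrightarrow> v = sv s" "sv v = sv s \<longleftrightarrow> v = s"
      using G.vertex_mirror[OF that] G.vertex_mirror[OF s(1)] by metis+
    then show ?thesis
      using s(2) by (simp add: G.net_out_symmetrize[OF that] net_d \<delta>_def)
  qed
  have net_g: "net_out E tail head g v
      = net_out E tail head f v + of_int (net_out E tail head (\<lambda>e. d e + d (se e)) v)" for v
    unfolding g_def by (subst net_out_add) (simp only: net_out_of_int)
  have "0 \<le> g e \<and> g e \<le> real (u e)" if e: "e \<in> E" for e
  proof -
    have "(e, True) \<in> plus_arcs E" "(e, False) \<in> plus_arcs E"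
      using e by (auto simp: plus_arcs_def)
    then have "of_int (c (e, True) + c (se e, True)) \<le> real (u e) - f e"
        and "of_int (c (e, False) + c (se e, False)) \<le> f e"
      using budget unfolding within_sym_budget_def c_def resid_def plus_se_def by force+
    moreover have c_nonneg: "0 \<le> real_of_int (c x)" for x
      by (simp add: c_def)
    ultimately show ?thesis
      unfolding g_def d_def of_int_add of_int_diff
      using c_nonneg[of "(e, True)"] c_nonneg[of "(e, False)"] c_nonneg[of "(se e, True)"] c_nonneg[of "(se e, False)"]
      by linarith
  qed
  moreover have "net_out E tail head g v = 0" if "v \<in> V - {s, sv s}" for v
    using that IS_flow_conservation[OF f that] net_dd[of v] net_g[of v] by (simp add: \<delta>_def)
  moreover have "g e \<in> \<int> \<and> g (se e) = g e" if "e \<in> E" for e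
    using IS_flow_arc[OF f] G.arc_mirror that by (simp add: g_def add.commute)
  ultimately have "is_IS_flow V E tail head sv se u s g"
    unfolding is_IS_flow_def is_flow_iff_net_out by blast
  moreover have "flow_value E tail head s g = flow_value E tail head s f + 2"
    using net_dd[OF s(1)] net_g[of s] s(2) by (simp add: flow_value_eq_net_out \<delta>_def)
  ultimately show thesis
    using that by blast
qed

lemma budget_walk_of_larger_flow:
  assumes net: "skew_sym_network V E tail head sv se u s"
    and f: "is_IS_flow V E tail head sv se u s f"
    and g: "is_IS_flow V E tail head sv se u s g"
    and larger: "flow_value E tail head s f < flow_value E tail head s g"
  obtains W where "walk (plus_tl tail head) (plus_hd tail head) s W (sv s)" "set W \<subseteq> plus_arcs E"
    "within_sym_budget (plus_arcs E) (plus_se se) (resid u f) W"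
proof -
  interpret G: skew_graph V E tail head sv se
    using skew_graph_of_network[OF net] .
  interpret P: skew_graph V "plus_arcs E" "plus_tl tail head" "plus_hd tail head" sv "plus_se se"
    using skew_graph_plus_of_network[OF net] .
  note flows = IS_flow_arc[OF f] IS_flow_arc[OF g]
  \<comment> \<open>the positive and negative parts of g - f, carried by the forward and reverse arcs of G+\<close>
  define phi where "phi x = (if snd x then max (\<lfloor>g (fst x)\<rfloor> - \<lfloor>f (fst x)\<rfloor>) 0
                             else max (\<lfloor>f (fst x)\<rfloor> - \<lfloor>g (fst x)\<rfloor>) 0)" for x
  have net_phi: "of_int (net_out (plus_arcs E) (plus_tl tail head) (plus_hd tail head) phi v)
      = net_out E tail head g v - net_out E tail head f v" for v
  proof -
    have "net_out (plus_arcs E) (plus_tl tail head) (plus_hd tail head) phi v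
        = net_out E tail head (\<lambda>e. \<lfloor>g e\<rfloor> - \<lfloor>f e\<rfloor>) v"
      unfolding net_out_plus_arcs[OF G.finite_arcs] phi_def by (rule net_out_cong) (simp add: max_def)
    also have "real_of_int \<dots> = net_out E tail head (\<lambda>e. g e - f e) v"
      unfolding net_out_of_int[symmetric] using flows by (intro net_out_cong) (simp add: of_int_floor)
    finally show ?thesis
      by (simp add: net_out_diff)
  qed
  have "net_out (plus_arcs E) (plus_tl tail head) (plus_hd tail head) phi v = 0" if "v \<in> V - {s, sv s}" for v
    using net_phi[of v] IS_flow_conservation[OF f that] IS_flow_conservation[OF g that] by simp
  moreover have "0 < net_out (plus_arcs E) (plus_tl tail head) (plus_hd tail head) phi s"
    using net_phi[of s] larger by (simp add: flow_value_eq_net_out)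
  moreover have "phi (plus_se se x) = phi x" if "x \<in> plus_arcs E" for x
    using that flows by (auto simp: phi_def plus_se_def plus_arcs_def)
  moreover have "0 \<le> phi x" for x
    by (simp add: phi_def)
  ultimately obtain W where W: "walk (plus_tl tail head) (plus_hd tail head) s W (sv s)"
      "set W \<subseteq> plus_arcs E" "within_sym_budget (plus_arcs E) (plus_se se) phi W"
    using P.exists_budget_walk[OF source_ne_sink(1)[OF net]] by blast
  have "real_of_int (phi x) \<le> resid u f x" if "x \<in> plus_arcs E" for x
  proof -
    obtain e b where x: "x = (e, b)" "e \<in> E"
      using \<open>x \<in> plus_arcs E\<close> by (cases x) (auto simp: plus_arcs_def)
    then show ?thesis
      using flows(1,2)[OF x(2)] by (cases b) (auto simp: phi_def resid_def of_int_floor of_int_max)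
  qed
  with W(3) have "within_sym_budget (plus_arcs E) (plus_se se) (resid u f) W"
    unfolding within_sym_budget_def by (metis of_int_le_iff of_int_of_nat_eq order_trans)
  with W(1,2) show thesis
    using that by blast
qed

lemma budget_walk_iff_not_maximum:
  assumes net: "skew_sym_network V E tail head sv se u s"
    and f: "is_IS_flow V E tail head sv se u s f"
  shows "(\<exists>W. walk (plus_tl tail head) (plus_hd tail head) s W (sv s) \<and> set W \<subseteq> plus_arcs E
            \<and> within_sym_budget (plus_arcs E) (plus_se se) (resid u f) W)
     \<longleftrightarrow> \<not> (\<forall>g. is_IS_flow V E tail head sv se u s g \<longrightarrow> flow_value E tail head s g \<le> flow_value E tail head s f)"
  (is "?budget_walk \<longleftrightarrow> \<not> ?maximum")
proof
  assume ?budget_walk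
  then obtain W where "walk (plus_tl tail head) (plus_hd tail head) s W (sv s)" "set W \<subseteq> plus_arcs E"
      "within_sym_budget (plus_arcs E) (plus_se se) (resid u f) W"
    by blast
  then obtain g where "is_IS_flow V E tail head sv se u s g"
      "flow_value E tail head s g = flow_value E tail head s f + 2"
    by (rule IS_flow_augment[OF net f])
  then show "\<not> ?maximum"
    by force
next
  assume "\<not> ?maximum"
  then obtain g where "is_IS_flow V E tail head sv se u s g"
      "flow_value E tail head s f < flow_value E tail head s g"
    by force
  then obtain W where "walk (plus_tl tail head) (plus_hd tail head) s W (sv s)" "set W \<subseteq> plus_arcs E"
      "within_sym_budget (plus_arcs E) (plus_se se) (resid u f) W"
    by (rule budget_walk_of_larger_flow[OF net f])
  then show ?budget_walk
    by blast
qed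

theorem mainTheorem5:
  fixes V :: "'v set" and E :: "'e set" and tail head :: "'e \<Rightarrow> 'v"
    and sv :: "'v \<Rightarrow> 'v" and se :: "'e \<Rightarrow> 'e" and u :: "'e \<Rightarrow> nat" and s :: 'v
    and f :: "'e \<Rightarrow> real"
  assumes "skew_sym_network V E tail head sv se u s"
    and "is_IS_flow V E tail head sv se u s f"
  shows "(\<forall>g. is_IS_flow V E tail head sv se u s g \<longrightarrow> flow_value E tail head s g \<le> flow_value E tail head s f)
     \<longleftrightarrow> \<not> (\<exists>p. is_regular_path
                  (split_arcs (plus_arcs E) (resid u f))
                  (split_tl (plus_tl tail head)) (split_hd (plus_hd tail head))
                  (split_se (plus_se se)) p s (sv s))"
proof -
  interpret P: skew_graph V "plus_arcs E" "plus_tl tail head" "plus_hd tail head" sv "plus_se se"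
    using skew_graph_plus_of_network[OF assms(1)] .
  show ?thesis
    using P.regular_split_path_iff_budget_walk[where h = "resid u f", OF resid_plus_arcs[OF assms]
        source_ne_sink(2)[OF assms(1)]]
      budget_walk_iff_not_maximum[OF assms] by blast
qed

end
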